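(* Let $\star\in\{\boxtimes,\circ\}$, let $G,H$ be graphs with non-empty edge sets, and let $M_G\subseteq E_G$, $M_H\subseteq E_H$. The following are equivalent: (1) $F_{\ast}(M_G,M_H)$ is a maximum $1$-matching of $G\star H$; (2) $M_G$ is a perfect $1$-matching of $G$ and $M_H$ is a perfect $1$-matching of $H$; (3) $F_{\ast}(M_G,M_H)$ is a perfect $1$-matching of $G\star H$.
   Context: Graphs are finite, simple, undirected. A $1$-matching of $G$ is a set of pairwise vertex-disjoint edges; it is maximum if it has largest cardinality among $1$-matchings of $G$, and perfect if every vertex is incident to one of its edges. Products on $V_G\times V_H$: in $G\boxtimes H$, $(g,h)\sim(g',h')$ iff (i) $\{g,g'\}\in E_G$, $h=h'$; or (ii) $g=g'$, $\{h,h'\}\in E_H$; or (iii) $\{g,g'\}\in E_G$ and $\{h,h'\}\in E_H$; in $G\circ H$ iff $\{g,g'\}\in E_G$ or (ii). $F_{\ast}(M_G,M_H)=\{\{(g,h),(g',h')\}:\{g,g'\}\in M_G,\{h,h'\}\in M_H\}$. *)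

theory Defs
  imports Main
begin

definition graph :: "'a set \<Rightarrow> 'a set set \<Rightarrow> bool" where
  "graph V E \<longleftrightarrow> finite V \<and>
     (\<forall>e\<in>E. \<exists>u v. e = {u, v} \<and> u \<noteq> v \<and> u \<in> V \<and> v \<in> V)"

definition matching :: "'a set set \<Rightarrow> 'a set set \<Rightarrow> bool" where
  "matching E M \<longleftrightarrow> M \<subseteq> E \<and> (\<forall>e\<in>M. \<forall>f\<in>M. e \<noteq> f \<longrightarrow> e \<inter> f = {})"

definition maximum_matching :: "'a set set \<Rightarrow> 'a set set \<Rightarrow> bool" where
  "maximum_matching E M \<longleftrightarrow> matching E M \<and>
     (\<forall>M'. matching E M' \<longrightarrow> card M' \<le> card M)"

definition perfect_matching :: "'a set \<Rightarrow> 'a set set \<Rightarrow> 'a set set \<Rightarrow> bool" where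
  "perfect_matching V E M \<longleftrightarrow> matching E M \<and> (\<forall>v\<in>V. \<exists>e\<in>M. v \<in> e)"

datatype graph_product = Strong | Lexicographic

fun prod_edges :: "graph_product \<Rightarrow> 'a set \<Rightarrow> 'a set set \<Rightarrow> 'b set \<Rightarrow> 'b set set
    \<Rightarrow> ('a \<times> 'b) set set" where
  "prod_edges Strong VG EG VH EH =
     {{(g, h), (g', h')} | g h g' h'. g \<in> VG \<and> g' \<in> VG \<and> h \<in> VH \<and> h' \<in> VH \<and>
        (({g, g'} \<in> EG \<and> h = h') \<or> (g = g' \<and> {h, h'} \<in> EH) \<or>
         ({g, g'} \<in> EG \<and> {h, h'} \<in> EH))}"
| "prod_edges Lexicographic VG EG VH EH =
     {{(g, h), (g', h')} | g h g' h'. g \<in> VG \<and> g' \<in> VG \<and> h \<in> VH \<and> h' \<in> VH \<and>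
        ({g, g'} \<in> EG \<or> (g = g' \<and> {h, h'} \<in> EH))}"

definition F_ast :: "'a set set \<Rightarrow> 'b set set \<Rightarrow> ('a \<times> 'b) set set" where
  "F_ast MG MH = {{(g, h), (g', h')} | g h g' h'. {g, g'} \<in> MG \<and> {h, h'} \<in> MH}"

end

theory Submission
  imports Defs
begin

text \<open>A perfect matching is maximum because a matching M of a graph on V covers exactly
  2|M| \<le> |V| vertices. Conversely, if F(M_G, M_H) is maximum, every product edge meets a
  vertex it covers. A product vertex is covered by F(M_G, M_H) iff both of its coordinates
  are covered, and the edges (g,h)(g,h') and (g,h)(g',h) exist in both products, so M_G
  and M_H cover G and H. Finally F(M_G, M_H) is a matching iff M_G and M_H are: an edge
  {(g,h),(g',h')} of F(M_G, M_H) at (g,h) determines the M_G-mate g' of g and the M_H-mate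
  h' of h, and vice versa.\<close>

lemma graph_edgeD:
  assumes "graph V E" "{u, v} \<in> E"
  shows "u \<noteq> v" "u \<in> V" "v \<in> V"
proof -
  obtain x y where "{u, v} = {x, y}" "x \<noteq> y" "x \<in> V" "y \<in> V"
    using assms unfolding graph_def by blast
  then show "u \<noteq> v" "u \<in> V" "v \<in> V" by (auto simp: doubleton_eq_iff)
qed

lemma graph_edge_obtain:
  assumes "graph V E" "e \<in> E"
  obtains u v where "e = {u, v}" "u \<noteq> v"
  using assms unfolding graph_def by blast

lemma graph_edge_obtain_mate:
  assumes "graph V E" "e \<in> E" "a \<in> e"
  obtains b where "e = {a, b}"
proof -
  obtain u v where e: "e = {u, v}"
    using graph_edge_obtain[OF assms(1,2)] by blast
  with assms(3) have "a = u \<or> a = v" by blast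
  then show thesis
    using that[of v] that[of u] e by (auto simp: insert_commute)
qed

lemma graph_edge_card:
  assumes "graph V E" "e \<in> E"
  shows "finite e" "card e = 2"
  using graph_edge_obtain[OF assms] by (metis card_2_iff finite.emptyI finite.insertI)+

lemma graph_edges_subset_Pow:
  assumes "graph V E"
  shows "E \<subseteq> Pow V"
  using assms unfolding graph_def by auto

lemma finite_graph_vertices:
  assumes "graph V E"
  shows "finite V"
  using assms unfolding graph_def by simp

lemma finite_graph_edges:
  assumes "graph V E"
  shows "finite E"
  using graph_edges_subset_Pow[OF assms] finite_graph_vertices[OF assms]
  by (meson finite_Pow_iff finite_subset)

lemma matching_iff_unique_mate:
  assumes "graph V E" "M \<subseteq> E"
  shows "matching E M \<longleftrightarrow> (\<forall>a x y. {a, x} \<in> M \<longrightarrow> {a, y} \<in> M \<longrightarrow> x = y)"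
proof
  assume M: "matching E M"
  show "\<forall>a x y. {a, x} \<in> M \<longrightarrow> {a, y} \<in> M \<longrightarrow> x = y"
  proof (intro allI impI)
    fix a x y assume ax: "{a, x} \<in> M" and ay: "{a, y} \<in> M"
    then have "{a, x} = {a, y}"
      using M unfolding matching_def by (metis disjoint_iff insertI1)
    moreover have "a \<noteq> x" "a \<noteq> y"
      using graph_edgeD(1)[OF assms(1)] ax ay assms(2) by auto
    ultimately show "x = y" by (auto simp: doubleton_eq_iff)
  qed
next
  assume mate: "\<forall>a x y. {a, x} \<in> M \<longrightarrow> {a, y} \<in> M \<longrightarrow> x = y"
  have "e = f" if ef: "e \<in> M" "f \<in> M" "a \<in> e" "a \<in> f" for e f a
  proof -
    obtain x where "e = {a, x}"
      using graph_edge_obtain_mate[OF assms(1)] ef(1,3) assms(2) by blast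
    moreover obtain y where "f = {a, y}"
      using graph_edge_obtain_mate[OF assms(1)] ef(2,4) assms(2) by blast
    ultimately show "e = f"
      using ef(1,2) mate by blast
  qed
  then show "matching E M"
    using assms(2) unfolding matching_def by blast
qed

lemma card_Union_matching:
  assumes "graph V E" "matching E M"
  shows "card (\<Union>M) = 2 * card M"
proof -
  have M: "M \<subseteq> E" "pairwise disjnt M"
    using assms(2) unfolding matching_def pairwise_def disjnt_def by blast+
  have "card (\<Union>M) = (\<Sum>e\<in>M. card e)"
    using card_Union_disjoint[OF M(2)] graph_edge_card(1)[OF assms(1)] M(1) by blast
  also have "\<dots> = (\<Sum>e\<in>M. 2)"
    using graph_edge_card(2)[OF assms(1)] M(1) by (intro sum.cong) auto
  finally show ?thesis by simp
qed

lemma perfect_matching_iff_subset_Union: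
  "perfect_matching V E M \<longleftrightarrow> matching E M \<and> V \<subseteq> \<Union>M"
  unfolding perfect_matching_def by blast

lemma perfect_matching_imp_maximum:
  assumes "graph V E" "perfect_matching V E M"
  shows "maximum_matching E M"
  unfolding maximum_matching_def
proof (intro conjI allI impI)
  show M: "matching E M"
    using assms(2) unfolding perfect_matching_iff_subset_Union by blast
  have covers: "\<Union>N \<subseteq> V" if "matching E N" for N
    using that graph_edges_subset_Pow[OF assms(1)] unfolding matching_def by blast
  have "\<Union>M = V"
    using assms(2) covers[OF M] unfolding perfect_matching_iff_subset_Union by blast
  fix M' assume M': "matching E M'"
  have "2 * card M' = card (\<Union>M')"
    using card_Union_matching[OF assms(1) M'] by simp
  also have "\<dots> \<le> card V"
    using covers[OF M'] finite_graph_vertices[OF assms(1)] by (rule card_mono[rotated])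
  also have "\<dots> = 2 * card M"
    using card_Union_matching[OF assms(1) M] \<open>\<Union>M = V\<close> by simp
  finally show "card M' \<le> card M" by simp
qed

lemma maximum_matching_meets_edge:
  assumes "graph V E" "maximum_matching E M" "e \<in> E"
  shows "e \<inter> \<Union>M \<noteq> {}"
proof
  assume free: "e \<inter> \<Union>M = {}"
  have M: "matching E M" "finite M"
    using assms(2) finite_graph_edges[OF assms(1)] finite_subset
    unfolding maximum_matching_def matching_def by blast+
  have "e \<noteq> {}"
    using graph_edge_card[OF assms(1,3)] by auto
  with free have "e \<notin> M" by blast
  with free M(1) assms(3) have "matching E (insert e M)"
    unfolding matching_def by blast
  then have "card (insert e M) \<le> card M"
    using assms(2) unfolding maximum_matching_def by blast
  with \<open>e \<notin> M\<close> M(2) show False by simp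
qed

lemma prod_edges_obtain:
  assumes "e \<in> prod_edges star VG EG VH EH"
  obtains g h g' h' where "e = {(g, h), (g', h')}" "(g, h) \<in> VG \<times> VH" "(g', h') \<in> VG \<times> VH"
    "{g, g'} \<in> EG \<or> {h, h'} \<in> EH"
  using assms by (cases star) auto

lemma graph_prod_edges:
  assumes "graph VG EG" "graph VH EH"
  shows "graph (VG \<times> VH) (prod_edges star VG EG VH EH)"
proof -
  have "\<exists>u v. e = {u, v} \<and> u \<noteq> v \<and> u \<in> VG \<times> VH \<and> v \<in> VG \<times> VH"
    if edge: "e \<in> prod_edges star VG EG VH EH" for e
  proof -
    obtain g h g' h' where e: "e = {(g, h), (g', h')}" "(g, h) \<in> VG \<times> VH" "(g', h') \<in> VG \<times> VH"
      "{g, g'} \<in> EG \<or> {h, h'} \<in> EH"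
      using prod_edges_obtain[OF edge] by blast
    then have "(g, h) \<noteq> (g', h')"
      using graph_edgeD(1)[OF assms(1)] graph_edgeD(1)[OF assms(2)] by auto
    with e show ?thesis by blast
  qed
  then show ?thesis
    using finite_graph_vertices[OF assms(1)] finite_graph_vertices[OF assms(2)]
    unfolding graph_def by simp
qed

lemma prod_edges_vertical:
  assumes "graph VH EH" "g \<in> VG" "{h, h'} \<in> EH"
  shows "{(g, h), (g, h')} \<in> prod_edges star VG EG VH EH"
  using assms graph_edgeD[OF assms(1,3)] by (cases star) auto

lemma prod_edges_horizontal:
  assumes "graph VG EG" "h \<in> VH" "{g, g'} \<in> EG"
  shows "{(g, h), (g', h)} \<in> prod_edges star VG EG VH EH"
  using assms graph_edgeD[OF assms(1,3)] by (cases star) auto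

lemma doubleton_in_F_ast_iff:
  "{(g, h), (g', h')} \<in> F_ast MG MH \<longleftrightarrow> {g, g'} \<in> MG \<and> {h, h'} \<in> MH"
proof
  assume "{(g, h), (g', h')} \<in> F_ast MG MH"
  then obtain a b a' b' where
    ab: "{(g, h), (g', h')} = {(a, b), (a', b')}" "{a, a'} \<in> MG" "{b, b'} \<in> MH"
    unfolding F_ast_def by blast
  from ab(1) consider "(g, h) = (a, b)" "(g', h') = (a', b')"
    | "(g, h) = (a', b')" "(g', h') = (a, b)"
    unfolding doubleton_eq_iff by blast
  then show "{g, g'} \<in> MG \<and> {h, h'} \<in> MH"
    using ab(2,3) by cases (simp_all add: insert_commute)
next
  assume "{g, g'} \<in> MG \<and> {h, h'} \<in> MH"
  then show "{(g, h), (g', h')} \<in> F_ast MG MH"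
    unfolding F_ast_def by blast
qed

lemma F_ast_obtain_mate:
  assumes "e \<in> F_ast MG MH" "(g, h) \<in> e"
  obtains g' h' where "e = {(g, h), (g', h')}"
proof -
  obtain a b a' b' where e: "e = {(a, b), (a', b')}"
    using assms(1) unfolding F_ast_def by blast
  with assms(2) have "(g, h) = (a, b) \<or> (g, h) = (a', b')" by blast
  then show thesis
    using that[of a' b'] that[of a b] e by (auto simp: insert_commute)
qed

lemma F_ast_subset_prod_edges:
  assumes "graph VG EG" "graph VH EH" "MG \<subseteq> EG" "MH \<subseteq> EH"
  shows "F_ast MG MH \<subseteq> prod_edges star VG EG VH EH"
proof
  fix e assume "e \<in> F_ast MG MH"
  then obtain g h g' h' where e: "e = {(g, h), (g', h')}" "{g, g'} \<in> EG" "{h, h'} \<in> EH"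
    using assms(3,4) unfolding F_ast_def by blast
  moreover have "g \<in> VG" "g' \<in> VG" "h \<in> VH" "h' \<in> VH"
    using graph_edgeD[OF assms(1) e(2)] graph_edgeD[OF assms(2) e(3)] by simp_all
  ultimately show "e \<in> prod_edges star VG EG VH EH"
    by (cases star) (simp, blast)+
qed

lemma Union_F_ast_iff:
  assumes "graph VG EG" "graph VH EH" "MG \<subseteq> EG" "MH \<subseteq> EH"
  shows "(g, h) \<in> \<Union>(F_ast MG MH) \<longleftrightarrow> g \<in> \<Union>MG \<and> h \<in> \<Union>MH"
proof
  assume "(g, h) \<in> \<Union>(F_ast MG MH)"
  then obtain e where "e \<in> F_ast MG MH" "(g, h) \<in> e" by blast
  then obtain g' h' where "{(g, h), (g', h')} \<in> F_ast MG MH"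
    using F_ast_obtain_mate by metis
  then show "g \<in> \<Union>MG \<and> h \<in> \<Union>MH"
    unfolding doubleton_in_F_ast_iff by blast
next
  assume "g \<in> \<Union>MG \<and> h \<in> \<Union>MH"
  then obtain eg eh where "eg \<in> MG" "g \<in> eg" "eh \<in> MH" "h \<in> eh" by blast
  moreover obtain g' h' where "eg = {g, g'}" "eh = {h, h'}"
    using graph_edge_obtain_mate[OF assms(1)] graph_edge_obtain_mate[OF assms(2)]
      calculation assms(3,4) by (metis subsetD)
  ultimately have "{(g, h), (g', h')} \<in> F_ast MG MH"
    unfolding doubleton_in_F_ast_iff by blast
  then show "(g, h) \<in> \<Union>(F_ast MG MH)" by blast
qed

lemma matching_F_ast_iff:
  assumes "graph VG EG" "graph VH EH" "MG \<subseteq> EG" "MH \<subseteq> EH" "MG \<noteq> {}" "MH \<noteq> {}"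
  shows "matching (prod_edges star VG EG VH EH) (F_ast MG MH)
           \<longleftrightarrow> matching EG MG \<and> matching EH MH"
proof -
  obtain eg eh where "eg \<in> MG" "eh \<in> MH"
    using assms(5,6) by blast
  then obtain g0 g0' h0 h0' where g0: "{g0, g0'} \<in> MG" and h0: "{h0, h0'} \<in> MH"
    using graph_edge_obtain[OF assms(1)] graph_edge_obtain[OF assms(2)] assms(3,4)
    by (metis subsetD)
  have "(\<forall>a x y. {a, x} \<in> F_ast MG MH \<longrightarrow> {a, y} \<in> F_ast MG MH \<longrightarrow> x = y)
          \<longleftrightarrow> (\<forall>a x y. {a, x} \<in> MG \<longrightarrow> {a, y} \<in> MG \<longrightarrow> x = y)
             \<and> (\<forall>a x y. {a, x} \<in> MH \<longrightarrow> {a, y} \<in> MH \<longrightarrow> x = y)"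
    (is "?F \<longleftrightarrow> ?G \<and> ?H")
  proof (intro iffI conjI allI impI)
    fix a x y assume "?F" "{a, x} \<in> MG" "{a, y} \<in> MG"
    with h0 have "(x, h0') = (y, h0')"
      using doubleton_in_F_ast_iff[of a h0 _ h0'] by blast
    then show "x = y" by simp
  next
    fix a x y assume "?F" "{a, x} \<in> MH" "{a, y} \<in> MH"
    with g0 have "(g0', x) = (g0', y)"
      using doubleton_in_F_ast_iff[of g0 a g0'] by blast
    then show "x = y" by simp
  next
    fix a x y assume "?G \<and> ?H" "{a, x} \<in> F_ast MG MH" "{a, y} \<in> F_ast MG MH"
    then show "x = y"
      by (cases a, cases x, cases y) (auto simp: doubleton_in_F_ast_iff)
  qed
  moreover have "matching (prod_edges star VG EG VH EH) (F_ast MG MH) \<longleftrightarrow> ?F"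
    using matching_iff_unique_mate[OF graph_prod_edges[OF assms(1,2)]
        F_ast_subset_prod_edges[OF assms(1-4)]] .
  ultimately show ?thesis
    using matching_iff_unique_mate[OF assms(1,3)] matching_iff_unique_mate[OF assms(2,4)]
    by simp
qed

lemma perfect_matching_F_ast_iff:
  assumes "graph VG EG" "graph VH EH" "MG \<subseteq> EG" "MH \<subseteq> EH" "VG \<noteq> {}" "VH \<noteq> {}"
  shows "perfect_matching (VG \<times> VH) (prod_edges star VG EG VH EH) (F_ast MG MH)
           \<longleftrightarrow> perfect_matching VG EG MG \<and> perfect_matching VH EH MH"
proof -
  have cover_iff: "VG \<times> VH \<subseteq> \<Union>(F_ast MG MH) \<longleftrightarrow> VG \<subseteq> \<Union>MG \<and> VH \<subseteq> \<Union>MH"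
    using Union_F_ast_iff[OF assms(1-4)] assms(5,6) by (auto simp: subset_iff)
  show ?thesis
  proof (cases "VG \<subseteq> \<Union>MG \<and> VH \<subseteq> \<Union>MH")
    case True
    then have "MG \<noteq> {}" "MH \<noteq> {}"
      using assms(5,6) by auto
    with True show ?thesis
      unfolding perfect_matching_iff_subset_Union cover_iff
      using matching_F_ast_iff[OF assms(1-4)] by simp
  next
    case False
    then show ?thesis
      unfolding perfect_matching_iff_subset_Union cover_iff by blast
  qed
qed

lemma maximum_matching_F_ast_imp_perfect:
  assumes "graph VG EG" "graph VH EH" "MG \<subseteq> EG" "MH \<subseteq> EH"
    and "{g1, g1'} \<in> EG" "{h1, h1'} \<in> EH"
    and max: "maximum_matching (prod_edges star VG EG VH EH) (F_ast MG MH)"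
  shows "perfect_matching (VG \<times> VH) (prod_edges star VG EG VH EH) (F_ast MG MH)"
  unfolding perfect_matching_iff_subset_Union
proof (intro conjI subsetI)
  show "matching (prod_edges star VG EG VH EH) (F_ast MG MH)"
    using max unfolding maximum_matching_def by blast
  have meets: "e \<inter> \<Union>(F_ast MG MH) \<noteq> {}" if "e \<in> prod_edges star VG EG VH EH" for e
    using maximum_matching_meets_edge[OF graph_prod_edges[OF assms(1,2)] max that] .
  fix x assume "x \<in> VG \<times> VH"
  then obtain g h where x: "x = (g, h)" "g \<in> VG" "h \<in> VH" by blast
  have "g \<in> \<Union>MG"
    using meets[OF prod_edges_vertical[OF assms(2) x(2) assms(6)]]
      Union_F_ast_iff[OF assms(1-4)] by blast
  moreover have "h \<in> \<Union>MH"
    using meets[OF prod_edges_horizontal[OF assms(1) x(3) assms(5)]]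
      Union_F_ast_iff[OF assms(1-4)] by blast
  ultimately show "x \<in> \<Union>(F_ast MG MH)"
    using Union_F_ast_iff[OF assms(1-4)] x(1) by blast
qed

theorem mainTheorem19:
  fixes VG :: "'a set" and EG MG :: "'a set set"
    and VH :: "'b set" and EH MH :: "'b set set"
    and star :: graph_product
  assumes "graph VG EG" and "graph VH EH"
    and "EG \<noteq> {}" and "EH \<noteq> {}"
    and "MG \<subseteq> EG" and "MH \<subseteq> EH"
  shows "(maximum_matching (prod_edges star VG EG VH EH) (F_ast MG MH)
            \<longleftrightarrow> perfect_matching VG EG MG \<and> perfect_matching VH EH MH)
       \<and> (perfect_matching VG EG MG \<and> perfect_matching VH EH MH
            \<longleftrightarrow> perfect_matching (VG \<times> VH) (prod_edges star VG EG VH EH) (F_ast MG MH))"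
proof -
  obtain eg eh where "eg \<in> EG" "eh \<in> EH"
    using assms(3,4) by blast
  then obtain g1 g1' h1 h1' where g1: "{g1, g1'} \<in> EG" and h1: "{h1, h1'} \<in> EH"
    using graph_edge_obtain[OF assms(1)] graph_edge_obtain[OF assms(2)] by metis
  then have "VG \<noteq> {}" "VH \<noteq> {}"
    using graph_edgeD[OF assms(1)] graph_edgeD[OF assms(2)] by blast+
  then have "perfect_matching (VG \<times> VH) (prod_edges star VG EG VH EH) (F_ast MG MH)
       \<longleftrightarrow> perfect_matching VG EG MG \<and> perfect_matching VH EH MH"
    using perfect_matching_F_ast_iff[OF assms(1,2,5,6)] by blast
  moreover have
    "maximum_matching (prod_edges star VG EG VH EH) (F_ast MG MH)
       \<longleftrightarrow> perfect_matching (VG \<times> VH) (prod_edges star VG EG VH EH) (F_ast MG MH)"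
    using maximum_matching_F_ast_imp_perfect[OF assms(1,2,5,6) g1 h1]
      perfect_matching_imp_maximum[OF graph_prod_edges[OF assms(1,2)]] by blast
  ultimately show ?thesis by blast
qed

end
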